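(* For every finite nonempty set of points $Z\subset\mathbb{S}_1$ and every positive integer $m$ one has $\alpha(mZ)<\alpha((m+5)Z)$.
   Context: Let $P_1\in\mathbb{P}^2(\mathbb{C})$ be a point and $f\colon\mathbb{S}_1\to\mathbb{P}^2$ the blow-up of $\mathbb{P}^2$ at $P_1$, with exceptional curve $E_1=f^{-1}(P_1)$; let $H$ be the pullback of the class of a line. Let $\mathbb{L}_1=3H-E_1=-K_{\mathbb{S}_1}$. For a finite set $Z\subset\mathbb{S}_1$ with ideal sheaf $\mathcal{I}_Z$ and a positive integer $m$, the initial degree is $\alpha(mZ)=\min\{d\ge 0:\ H^0(\mathbb{S}_1,d\mathbb{L}_1\otimes\mathcal{I}_Z^{(m)})\neq 0\}$, i.e. the least $d$ such that some effective divisor $D\in|d\mathbb{L}_1|$ has multiplicity at least $m$ at every point of $Z$. *)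

theory Defs
  imports Complex_Main
begin

(* Concrete model of S_1 = Bl_{P_1} P^2 with P_1 = [0:0:1] (coordinates x0,x1,x2).
   A section of d*L_1 = 3dH - dE_1 is a ternary form F of degree 3d (given by its
   coefficient function c i j l = coefficient of x0^i x1^j x2^l) with multiplicity
   at least d at P_1, i.e. no monomial with i + j < d.  The corresponding divisor is
   D = pi^* C - d E_1 where C = {F = 0}. *)

type_synonym form3 = "nat \<Rightarrow> nat \<Rightarrow> nat \<Rightarrow> complex"

definition in_linsys :: "nat \<Rightarrow> form3 \<Rightarrow> bool" where
  "in_linsys d c \<longleftrightarrow> (\<forall>i j l. c i j l \<noteq> 0 \<longrightarrow> i + j + l = 3 * d \<and> d \<le> i + j)"

definition nonzero_form :: "form3 \<Rightarrow> bool" where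
  "nonzero_form c \<longleftrightarrow> (\<exists>i j l. c i j l \<noteq> 0)"

(* points of S_1, given by representatives:
   Off p  : the point of S_1 over [p0:p1:p2] \<noteq> P_1  (p \<noteq> 0, (p0,p1) \<noteq> (0,0));
   OnE w  : the point of E_1 corresponding to the tangent direction [w0:w1] at P_1. *)
datatype s1pt = Off "complex \<times> complex \<times> complex" | OnE "complex \<times> complex"

fun valid_pt :: "s1pt \<Rightarrow> bool" where
  "valid_pt (Off (p0, p1, p2)) \<longleftrightarrow> (p0, p1) \<noteq> (0, 0)"
| "valid_pt (OnE (a, b)) \<longleftrightarrow> (a, b) \<noteq> (0, 0)"

definition hmon :: "nat \<Rightarrow> nat \<Rightarrow> complex \<Rightarrow> complex" where
  "hmon e a x = of_nat (e choose a) * x ^ (e - a)"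

(* multiplicity of the curve F = 0 (F of degree n) at the point [p] of P^2 is \<ge> m:
   all Hasse derivatives of order < m vanish at p *)
definition mult_ge_P2 :: "nat \<Rightarrow> form3 \<Rightarrow> complex \<times> complex \<times> complex \<Rightarrow> nat \<Rightarrow> bool" where
  "mult_ge_P2 n c p m \<longleftrightarrow>
     (\<forall>a b g. a + b + g < m \<longrightarrow>
        (\<Sum>i\<le>n. \<Sum>j\<le>n. \<Sum>l\<le>n. c i j l * hmon i a (fst p) * hmon j b (fst (snd p))
                                  * hmon l g (snd (snd p))) = 0)"

(* Blow-up charts over the affine chart x2 = 1:
   chart 1: x0 = u, x1 = u t, local equation of D is  sum c i j l u^(i+j-d) t^j;
   chart 2: x0 = s v, x1 = v, local equation of D is  sum c i j l s^i v^(i+j-d).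
   E_1 = {u = 0} resp. {v = 0}; direction [a:b] is (u,t) = (0, b/a) resp. (s,v) = (a/b, 0). *)
definition mult_ge_E :: "nat \<Rightarrow> form3 \<Rightarrow> complex \<times> complex \<Rightarrow> nat \<Rightarrow> bool" where
  "mult_ge_E d c w m \<longleftrightarrow>
     (if fst w \<noteq> 0 then
        (\<forall>a b. a + b < m \<longrightarrow>
          (\<Sum>i\<le>3*d. \<Sum>j\<le>3*d. \<Sum>l\<le>3*d. c i j l * hmon (i + j - d) a 0
                                        * hmon j b (snd w / fst w)) = 0)
      else
        (\<forall>a b. a + b < m \<longrightarrow>
          (\<Sum>i\<le>3*d. \<Sum>j\<le>3*d. \<Sum>l\<le>3*d. c i j l * hmon i a (fst w / snd w)
                                        * hmon (i + j - d) b 0) = 0))"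

fun mult_ge :: "nat \<Rightarrow> form3 \<Rightarrow> s1pt \<Rightarrow> nat \<Rightarrow> bool" where
  "mult_ge d c (Off p) m \<longleftrightarrow> mult_ge_P2 (3 * d) c p m"
| "mult_ge d c (OnE w) m \<longleftrightarrow> mult_ge_E d c w m"

definition alpha_S1 :: "nat \<Rightarrow> s1pt set \<Rightarrow> nat" where
  "alpha_S1 m Z = (LEAST d. \<exists>c. in_linsys d c \<and> nonzero_form c \<and> (\<forall>z\<in>Z. mult_ge d c z m))"

end

theory Submission
  imports Defs
begin

(* Let F be a nonzero section of d L_1 with multiplicity at least m + 5 at the points of Z, and
   regard a form of degree N as a section of N H - e E_1 for a variable weight e at P_1.  A partial
   derivative lowers the multiplicity at every point of P^2 by at most one.  Along E_1, d/dx2 keeps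
   both e and the multiplicity, d/dx0 and d/dx1 lower both by one, and raising e by one lowers the
   multiplicity by one (lowering e costs nothing).  Let x0^i x1^j x2^l be a monomial of F with l
   maximal, a2 = min l 3 and a0 + a1 = k = 3 - a2 with a0 <= i, a1 <= j.  As F vanishes to order
   3 d - l >= d - 1 + k at P_1, its weight can be set to d - 1 + k; differentiating a0, a1, a2 times
   in x0, x1, x2 then leaves the coefficient of x0^(i-a0) x1^(j-a1) x2^(l-a2) nonzero and gives a
   section of (d - 1) L_1 with multiplicity at least m + 2 off E_1 and m + 5 - (k - 1) - k >= m on
   E_1.  Hence alpha(mZ) <= d - 1 for d = alpha((m+5)Z), which exists because products of lines
   through P_1 have any prescribed multiplicity off E_1 and multiplicity 2 d along E_1. *)

lemma hmon_at_0: "hmon e a 0 = (if e = a then 1 else 0)"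
  by (cases "a \<le> e") (auto simp: hmon_def)

lemma hmon_Suc: "hmon (Suc i) a x = x * hmon i a x + (if a = 0 then 0 else hmon i (a - 1) x)"
proof (cases a)
  case (Suc a')
  have "a' < i \<Longrightarrow> x ^ (i - a') = x * x ^ (i - Suc a')"
    by (metis Suc_diff_Suc power_Suc)
  then show ?thesis
    using Suc by (cases "a' < i") (auto simp: hmon_def algebra_simps)
qed (simp add: hmon_def)

lemma hmon_derivative: "of_nat i * hmon (i - 1) a x = of_nat (Suc a) * hmon i (Suc a) x"
proof (cases i)
  case (Suc n)
  have "of_nat (Suc n) * of_nat (n choose a) = (of_nat (Suc a) * of_nat (Suc n choose Suc a) :: complex)"
    by (metis of_nat_mult Suc_times_binomial)
  then show ?thesis using Suc by (simp add: hmon_def mult.assoc[symmetric])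
qed (simp add: hmon_def)

lemma hmon_euler:
  "of_nat j * hmon j b x = of_nat b * hmon j b x + of_nat (Suc b) * x * hmon j (Suc b) x"
proof (cases "b < j")
  case True
  have binom: "of_nat j * of_nat (j choose b) =
      (of_nat b * of_nat (j choose b) + of_nat (Suc b) * of_nat (j choose Suc b) :: complex)"
    by (simp only: binomial_gbinomial gbinomial_mult_1)
  have "x ^ (j - b) = x * x ^ (j - Suc b)"
    by (metis True Suc_diff_Suc power_Suc)
  then have "of_nat j * hmon j b x = (of_nat j * of_nat (j choose b)) * (x * x ^ (j - Suc b))"
    by (simp add: hmon_def)
  also have "\<dots> = of_nat b * hmon j b x + of_nat (Suc b) * x * hmon j (Suc b) x"
    unfolding binom using \<open>x ^ (j - b) = _\<close> by (simp add: hmon_def algebra_simps)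
  finally show ?thesis .
qed (cases "j = b", auto simp: hmon_def binomial_eq_0)

lemma sum_atMost_Suc_shift_vanishing:
  fixes g :: "nat \<Rightarrow> 'a::comm_monoid_add"
  assumes "g 0 = 0" and "g (Suc K) = 0"
  shows "(\<Sum>l\<le>K. g (Suc l)) = (\<Sum>l\<le>K. g l)"
  using sum.atMost_Suc_shift[of g K] sum.atMost_Suc[of g K] assms by simp

lemma sum3_atMost_bound:
  fixes f :: "nat \<Rightarrow> nat \<Rightarrow> nat \<Rightarrow> 'a::comm_monoid_add"
  assumes "\<And>i j l. f i j l \<noteq> 0 \<Longrightarrow> i \<le> K \<and> j \<le> K \<and> l \<le> K" and "K \<le> K'"
  shows "(\<Sum>i\<le>K'. \<Sum>j\<le>K'. \<Sum>l\<le>K'. f i j l) = (\<Sum>i\<le>K. \<Sum>j\<le>K. \<Sum>l\<le>K. f i j l)"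
proof -
  have vanish: "f i j l = 0" if "K < i \<or> K < j \<or> K < l" for i j l
    using assms(1) that by (meson not_le)
  have "(\<Sum>l\<le>K'. f i j l) = (\<Sum>l\<le>K. f i j l)" for i j
    by (rule sum.mono_neutral_right) (use assms(2) vanish in auto)
  moreover have "(\<Sum>j\<le>K'. \<Sum>l\<le>K. f i j l) = (\<Sum>j\<le>K. \<Sum>l\<le>K. f i j l)" for i
    by (rule sum.mono_neutral_right) (use assms(2) vanish in \<open>auto intro!: sum.neutral\<close>)
  moreover have "(\<Sum>i\<le>K'. \<Sum>j\<le>K. \<Sum>l\<le>K. f i j l) = (\<Sum>i\<le>K. \<Sum>j\<le>K. \<Sum>l\<le>K. f i j l)"
    by (rule sum.mono_neutral_right) (use assms(2) vanish in \<open>auto intro!: sum.neutral\<close>)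
  ultimately show ?thesis by simp
qed

definition homogeneous :: "nat \<Rightarrow> form3 \<Rightarrow> bool" where
  "homogeneous N c \<longleftrightarrow> (\<forall>i j l. c i j l \<noteq> 0 \<longrightarrow> i + j + l = N)"

(* the forms of H^0(S_1, N H - e E_1) *)
definition section_of :: "nat \<Rightarrow> nat \<Rightarrow> form3 \<Rightarrow> bool" where
  "section_of N e c \<longleftrightarrow> (\<forall>i j l. c i j l \<noteq> 0 \<longrightarrow> i + j + l = N \<and> e \<le> i + j)"

lemma in_linsys_iff_section_of: "in_linsys d c \<longleftrightarrow> section_of (3 * d) d c"
  by (simp add: in_linsys_def section_of_def)

lemma section_ofD: "section_of N e c \<Longrightarrow> c i j l \<noteq> 0 \<Longrightarrow> i + j + l = N \<and> e \<le> i + j"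
  by (simp add: section_of_def)

lemma section_of_homogeneous: "section_of N e c \<Longrightarrow> homogeneous N c"
  by (simp add: section_of_def homogeneous_def)

lemma section_of_mono: "section_of N e c \<Longrightarrow> e' \<le> e \<Longrightarrow> section_of N e' c"
  unfolding section_of_def using le_trans by blast

lemma homogeneous_bound:
  assumes "homogeneous N c" and "c i j l \<noteq> 0" shows "i \<le> N \<and> j \<le> N \<and> l \<le> N"
proof -
  have "i + j + l = N" using assms unfolding homogeneous_def by blast
  then show ?thesis by linarith
qed

definition swap01 :: "form3 \<Rightarrow> form3" where "swap01 c i j l = c j i l"
definition swap12 :: "form3 \<Rightarrow> form3" where "swap12 c i j l = c i l j"

lemma homogeneous_swap01 [simp]: "homogeneous N (swap01 c) \<longleftrightarrow> homogeneous N c"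
  unfolding homogeneous_def swap01_def by (metis add.commute)

lemma homogeneous_swap12 [simp]: "homogeneous N (swap12 c) \<longleftrightarrow> homogeneous N c"
  unfolding homogeneous_def swap12_def by (metis add.commute add.assoc)

lemma section_of_swap01 [simp]: "section_of N e (swap01 c) \<longleftrightarrow> section_of N e c"
  unfolding section_of_def swap01_def by (metis add.commute)

definition dx0 :: "form3 \<Rightarrow> form3" where "dx0 c i j l = of_nat (Suc i) * c (Suc i) j l"
definition dx1 :: "form3 \<Rightarrow> form3" where "dx1 c i j l = of_nat (Suc j) * c i (Suc j) l"
definition dx2 :: "form3 \<Rightarrow> form3" where "dx2 c i j l = of_nat (Suc l) * c i j (Suc l)"

lemma dx1_eq_swap01: "dx1 c = swap01 (dx0 (swap01 c))"
  by (simp add: fun_eq_iff dx0_def dx1_def swap01_def)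

lemma dx2_eq_swap12: "dx2 c = swap12 (dx1 (swap12 c))"
  by (simp add: fun_eq_iff dx1_def dx2_def swap12_def)

lemma homogeneous_dx0: "homogeneous N c \<Longrightarrow> homogeneous (N - 1) (dx0 c)"
  unfolding homogeneous_def dx0_def by (metis add_Suc diff_Suc_1 mult_eq_0_iff)

lemma homogeneous_dx1: "homogeneous N c \<Longrightarrow> homogeneous (N - 1) (dx1 c)"
  using homogeneous_dx0[of N "swap01 c"] by (simp add: dx1_eq_swap01)

lemma homogeneous_dx2: "homogeneous N c \<Longrightarrow> homogeneous (N - 1) (dx2 c)"
  using homogeneous_dx1[of N "swap12 c"] by (simp add: dx2_eq_swap12)

lemma section_of_dx0: "section_of N (Suc e) c \<Longrightarrow> section_of (N - 1) e (dx0 c)"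
  unfolding section_of_def dx0_def
  by (metis (no_types, lifting) add_Suc diff_Suc_1 Suc_le_mono mult_eq_0_iff)

lemma section_of_dx1: "section_of N (Suc e) c \<Longrightarrow> section_of (N - 1) e (dx1 c)"
  unfolding section_of_def dx1_def
  by (metis (no_types, lifting) add_Suc add_Suc_right diff_Suc_1 Suc_le_mono mult_eq_0_iff)

lemma section_of_dx2: "section_of N e c \<Longrightarrow> section_of (N - 1) e (dx2 c)"
  unfolding section_of_def dx2_def by (metis (no_types, lifting) add_Suc_right diff_Suc_1 mult_eq_0_iff)

lemma swap01_dx0: "swap01 (dx0 c) = dx1 (swap01 c)"
  by (simp add: fun_eq_iff swap01_def dx0_def dx1_def)

lemma swap01_dx1: "swap01 (dx1 c) = dx0 (swap01 c)"
  by (simp add: fun_eq_iff swap01_def dx0_def dx1_def)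

lemma swap01_dx2: "swap01 (dx2 c) = dx2 (swap01 c)"
  by (simp add: fun_eq_iff swap01_def dx2_def)

section \<open>Multiplicity at points off the exceptional curve\<close>

definition hasse_P2 :: "nat \<Rightarrow> form3 \<Rightarrow> nat \<Rightarrow> nat \<Rightarrow> nat \<Rightarrow> complex \<times> complex \<times> complex \<Rightarrow> complex" where
  "hasse_P2 K c a b g p = (\<Sum>i\<le>K. \<Sum>j\<le>K. \<Sum>l\<le>K. c i j l * hmon i a (fst p) * hmon j b (fst (snd p))
                                  * hmon l g (snd (snd p)))"

lemma mult_ge_P2_iff: "mult_ge_P2 n c p r \<longleftrightarrow> (\<forall>a b g. a + b + g < r \<longrightarrow> hasse_P2 n c a b g p = 0)"
  by (simp add: mult_ge_P2_def hasse_P2_def)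

lemma mult_ge_P2_mono: "mult_ge_P2 n c p r \<Longrightarrow> r' \<le> r \<Longrightarrow> mult_ge_P2 n c p r'"
  by (simp add: mult_ge_P2_def)

lemma hasse_P2_bound: "homogeneous N c \<Longrightarrow> N \<le> K \<Longrightarrow> hasse_P2 K c a b g p = hasse_P2 N c a b g p"
  unfolding hasse_P2_def by (rule sum3_atMost_bound) (auto dest: homogeneous_bound)

lemma hasse_P2_swap01:
  "hasse_P2 K (swap01 c) a b g (p0, p1, p2) = hasse_P2 K c b a g (p1, p0, p2)"
  unfolding hasse_P2_def swap01_def by (subst sum.swap) (simp add: mult_ac)

lemma hasse_P2_swap12:
  "hasse_P2 K (swap12 c) a b g (p0, p1, p2) = hasse_P2 K c a g b (p0, p2, p1)"
  unfolding hasse_P2_def swap12_def by (subst (2) sum.swap) (simp add: mult_ac)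

lemma mult_ge_P2_swap01:
  "mult_ge_P2 n (swap01 c) (p0, p1, p2) r \<longleftrightarrow> mult_ge_P2 n c (p1, p0, p2) r"
  unfolding mult_ge_P2_iff hasse_P2_swap01 by (metis add.commute)

lemma mult_ge_P2_swap12:
  "mult_ge_P2 n (swap12 c) (p0, p1, p2) r \<longleftrightarrow> mult_ge_P2 n c (p0, p2, p1) r"
  unfolding mult_ge_P2_iff hasse_P2_swap12 by (metis add.commute add.assoc)

lemma hasse_P2_dx0:
  assumes "\<And>j l. c (Suc K) j l = 0"
  shows "hasse_P2 K (dx0 c) a b g p = of_nat (Suc a) * hasse_P2 K c (Suc a) b g p"
proof -
  obtain p0 p1 p2 where p: "p = (p0, p1, p2)" by (cases p) auto
  define G where
    "G i = (\<Sum>j\<le>K. \<Sum>l\<le>K. of_nat i * c i j l * hmon (i - 1) a p0 * hmon j b p1 * hmon l g p2)" for i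
  have "hasse_P2 K (dx0 c) a b g p = (\<Sum>i\<le>K. G (Suc i))"
    by (simp add: hasse_P2_def G_def dx0_def p)
  also have "\<dots> = (\<Sum>i\<le>K. G i)"
    by (rule sum_atMost_Suc_shift_vanishing) (simp_all add: G_def assms)
  also have "\<dots> = (\<Sum>i\<le>K. \<Sum>j\<le>K. \<Sum>l\<le>K.
      of_nat (Suc a) * (c i j l * hmon i (Suc a) p0 * hmon j b p1 * hmon l g p2))"
    unfolding G_def
  proof (intro sum.cong refl)
    fix i j l
    show "of_nat i * c i j l * hmon (i - 1) a p0 * hmon j b p1 * hmon l g p2 =
        of_nat (Suc a) * (c i j l * hmon i (Suc a) p0 * hmon j b p1 * hmon l g p2)"
      using hmon_derivative[of i a p0] by (simp add: mult_ac)
  qed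
  also have "\<dots> = of_nat (Suc a) * hasse_P2 K c (Suc a) b g p"
    by (simp add: hasse_P2_def p sum_distrib_left)
  finally show ?thesis .
qed

lemma mult_ge_P2_dx0:
  assumes "homogeneous N c" and "mult_ge_P2 N c p (Suc r)"
  shows "mult_ge_P2 (N - 1) (dx0 c) p r"
  unfolding mult_ge_P2_iff
proof (intro allI impI)
  fix a b g assume "a + b + g < r"
  then have "hasse_P2 N c (Suc a) b g p = 0" using assms(2) unfolding mult_ge_P2_iff by simp
  moreover have "c (Suc N) j l = 0" for j l using homogeneous_bound[OF assms(1)] by fastforce
  then have "hasse_P2 N (dx0 c) a b g p = of_nat (Suc a) * hasse_P2 N c (Suc a) b g p"
    by (rule hasse_P2_dx0)
  ultimately show "hasse_P2 (N - 1) (dx0 c) a b g p = 0"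
    using hasse_P2_bound[OF homogeneous_dx0[OF assms(1)], of N] by simp
qed

lemma mult_ge_P2_dx1:
  assumes "homogeneous N c" and "mult_ge_P2 N c p (Suc r)"
  shows "mult_ge_P2 (N - 1) (dx1 c) p r"
proof -
  obtain p0 p1 p2 where p: "p = (p0, p1, p2)" by (cases p) auto
  have "mult_ge_P2 N (swap01 c) (p1, p0, p2) (Suc r)" using assms(2) p by (simp add: mult_ge_P2_swap01)
  then have "mult_ge_P2 (N - 1) (dx0 (swap01 c)) (p1, p0, p2) r"
    by (rule mult_ge_P2_dx0[rotated]) (simp add: assms(1))
  then show ?thesis by (simp add: dx1_eq_swap01 mult_ge_P2_swap01 p)
qed

lemma mult_ge_P2_dx2:
  assumes "homogeneous N c" and "mult_ge_P2 N c p (Suc r)"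
  shows "mult_ge_P2 (N - 1) (dx2 c) p r"
proof -
  obtain p0 p1 p2 where p: "p = (p0, p1, p2)" by (cases p) auto
  have "mult_ge_P2 N (swap12 c) (p0, p2, p1) (Suc r)" using assms(2) p by (simp add: mult_ge_P2_swap12)
  then have "mult_ge_P2 (N - 1) (dx1 (swap12 c)) (p0, p2, p1) r"
    by (rule mult_ge_P2_dx1[rotated]) (simp add: assms(1))
  then show ?thesis by (simp add: dx2_eq_swap12 mult_ge_P2_swap12 p)
qed

section \<open>Multiplicity at points of the exceptional curve\<close>

(* the Hasse derivative of order (a, b) at (0, t) of the local equation
   sum c i j l u^(i+j-e) t^j of pi^* C - e E_1 in chart 1 of Defs *)
definition hasse_E :: "nat \<Rightarrow> nat \<Rightarrow> form3 \<Rightarrow> nat \<Rightarrow> nat \<Rightarrow> complex \<Rightarrow> complex" where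
  "hasse_E K e c a b t = (\<Sum>i\<le>K. \<Sum>j\<le>K. \<Sum>l\<le>K. c i j l * hmon (i + j - e) a 0 * hmon j b t)"

definition mult_ge_chart :: "nat \<Rightarrow> nat \<Rightarrow> form3 \<Rightarrow> complex \<Rightarrow> nat \<Rightarrow> bool" where
  "mult_ge_chart N e c t r \<longleftrightarrow> (\<forall>a b. a + b < r \<longrightarrow> hasse_E N e c a b t = 0)"

lemma hasse_E_bound: "homogeneous N c \<Longrightarrow> N \<le> K \<Longrightarrow> hasse_E K e c a b t = hasse_E N e c a b t"
  unfolding hasse_E_def by (rule sum3_atMost_bound) (auto dest: homogeneous_bound)

lemma hasse_E_dx0:
  assumes sec: "section_of N (Suc e) c"
  shows "hasse_E N e (dx0 c) a b t = of_nat (a + Suc e) * hasse_E N (Suc e) c a b t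
      - (of_nat b * hasse_E N (Suc e) c a b t + of_nat (Suc b) * t * hasse_E N (Suc e) c a (Suc b) t)"
proof -
  define T where "T i j l b' = c i j l * hmon (i + j - Suc e) a 0 * hmon j b' t" for i j l b'
  define G where "G i = (\<Sum>j\<le>N. \<Sum>l\<le>N. of_nat i * T i j l b)" for i
  have "c (Suc N) j l = 0" for j l
    using homogeneous_bound[OF section_of_homogeneous[OF sec]] by fastforce
  then have "hasse_E N e (dx0 c) a b t = (\<Sum>i\<le>N. G i)"
    by (subst sum_atMost_Suc_shift_vanishing[symmetric])
      (simp_all add: hasse_E_def G_def T_def dx0_def mult_ac)
  also have "\<dots> = (\<Sum>i\<le>N. \<Sum>j\<le>N. \<Sum>l\<le>N. of_nat (a + Suc e) * T i j l b
      - (of_nat b * T i j l b + of_nat (Suc b) * t * T i j l (Suc b)))"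
    unfolding G_def
  proof (intro sum.cong refl)
    fix i j l
    have "of_nat i * T i j l b = (of_nat (a + Suc e) - of_nat j) * T i j l b"
    proof (cases "T i j l b = 0")
      case False
      then have "c i j l \<noteq> 0" and "i + j - Suc e = a" by (auto simp: T_def hmon_at_0 split: if_splits)
      then have "i + j = a + Suc e" using section_ofD[OF sec] by fastforce
      then have "(of_nat (a + Suc e) :: complex) = of_nat i + of_nat j" by (metis of_nat_add)
      then show ?thesis by simp
    qed simp
    also have "\<dots> = of_nat (a + Suc e) * T i j l b - c i j l * hmon (i + j - Suc e) a 0 * (of_nat j * hmon j b t)"
      by (simp add: T_def algebra_simps)
    also have "\<dots> = of_nat (a + Suc e) * T i j l b - (of_nat b * T i j l b + of_nat (Suc b) * t * T i j l (Suc b))"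
      unfolding hmon_euler by (simp add: T_def algebra_simps)
    finally show "of_nat i * T i j l b = \<dots>" .
  qed
  also have "\<dots> = of_nat (a + Suc e) * hasse_E N (Suc e) c a b t
      - (of_nat b * hasse_E N (Suc e) c a b t + of_nat (Suc b) * t * hasse_E N (Suc e) c a (Suc b) t)"
    by (simp add: hasse_E_def T_def sum_subtractf sum.distrib sum_distrib_left)
  finally show ?thesis .
qed

lemma hasse_E_dx1:
  assumes hom: "homogeneous N c"
  shows "hasse_E N e (dx1 c) a b t = of_nat (Suc b) * hasse_E N (Suc e) c a (Suc b) t"
proof -
  define G where
    "G i j = (\<Sum>l\<le>N. of_nat j * c i j l * hmon (i + j - Suc e) a 0 * hmon (j - 1) b t)" for i j
  have "c i (Suc N) l = 0" for i l using homogeneous_bound[OF hom] by fastforce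
  have "hasse_E N e (dx1 c) a b t = (\<Sum>i\<le>N. \<Sum>j\<le>N. G i (Suc j))"
    by (simp add: hasse_E_def G_def dx1_def mult_ac)
  also have "\<dots> = (\<Sum>i\<le>N. \<Sum>j\<le>N. G i j)"
    by (intro sum.cong refl sum_atMost_Suc_shift_vanishing) (simp_all add: G_def \<open>c _ (Suc N) _ = 0\<close>)
  also have "\<dots> = (\<Sum>i\<le>N. \<Sum>j\<le>N. \<Sum>l\<le>N.
      of_nat (Suc b) * (c i j l * hmon (i + j - Suc e) a 0 * hmon j (Suc b) t))"
    unfolding G_def
  proof (intro sum.cong refl)
    fix i j l
    show "of_nat j * c i j l * hmon (i + j - Suc e) a 0 * hmon (j - 1) b t =
        of_nat (Suc b) * (c i j l * hmon (i + j - Suc e) a 0 * hmon j (Suc b) t)"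
      using hmon_derivative[of j b t] by (simp add: mult_ac)
  qed
  also have "\<dots> = of_nat (Suc b) * hasse_E N (Suc e) c a (Suc b) t"
    by (simp add: hasse_E_def sum_distrib_left)
  finally show ?thesis .
qed

lemma hasse_E_dx2:
  assumes sec: "section_of N e c"
  shows "hasse_E N e (dx2 c) a b t = of_nat (N - e - a) * hasse_E N e c a b t"
proof -
  define G where "G i j l = of_nat l * c i j l * hmon (i + j - e) a 0 * hmon j b t" for i j l
  have "c i j (Suc N) = 0" for i j
    using homogeneous_bound[OF section_of_homogeneous[OF sec]] by fastforce
  have "hasse_E N e (dx2 c) a b t = (\<Sum>i\<le>N. \<Sum>j\<le>N. \<Sum>l\<le>N. G i j (Suc l))"
    by (simp add: hasse_E_def G_def dx2_def mult_ac)
  also have "\<dots> = (\<Sum>i\<le>N. \<Sum>j\<le>N. \<Sum>l\<le>N. G i j l)"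
    by (intro sum.cong refl sum_atMost_Suc_shift_vanishing) (simp_all add: G_def \<open>c _ _ (Suc N) = 0\<close>)
  also have "\<dots> = (\<Sum>i\<le>N. \<Sum>j\<le>N. \<Sum>l\<le>N. of_nat (N - e - a) * (c i j l * hmon (i + j - e) a 0 * hmon j b t))"
    unfolding G_def
  proof (intro sum.cong refl)
    fix i j l
    show "of_nat l * c i j l * hmon (i + j - e) a 0 * hmon j b t =
        of_nat (N - e - a) * (c i j l * hmon (i + j - e) a 0 * hmon j b t)"
    proof (cases "c i j l = 0 \<or> i + j - e \<noteq> a")
      case False
      then have "l = N - e - a" using section_ofD[OF sec, of i j l] by arith
      then show ?thesis by simp
    qed (auto simp: hmon_at_0)
  qed
  also have "\<dots> = of_nat (N - e - a) * hasse_E N e c a b t"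
    by (simp add: hasse_E_def sum_distrib_left)
  finally show ?thesis .
qed

lemma hasse_E_reweight:
  assumes "section_of N e c" and "section_of N e' c"
  shows "hasse_E N e' c a b t = (if a + e' < e then 0 else hasse_E N e c (a + e' - e) b t)"
proof -
  have "c i j l * hmon (i + j - e') a 0 =
      (if a + e' < e then 0 else c i j l * hmon (i + j - e) (a + e' - e) 0)" for i j l
  proof (cases "c i j l = 0")
    case False
    then have "e \<le> i + j" "e' \<le> i + j" using assms by (auto dest: section_ofD)
    then show ?thesis by (auto simp: hmon_at_0)
  qed simp
  then show ?thesis by (simp add: hasse_E_def)
qed

lemma mult_ge_chart_mono: "mult_ge_chart N e c t r \<Longrightarrow> r' \<le> r \<Longrightarrow> mult_ge_chart N e c t r'"
  by (simp add: mult_ge_chart_def)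

lemma mult_ge_chart_dx0:
  assumes sec: "section_of N (Suc e) c" and mult: "mult_ge_chart N (Suc e) c t (Suc r)"
  shows "mult_ge_chart (N - 1) e (dx0 c) t r"
  unfolding mult_ge_chart_def
proof (intro allI impI)
  fix a b assume "a + b < r"
  then have "hasse_E N (Suc e) c a b t = 0" "hasse_E N (Suc e) c a (Suc b) t = 0"
    using mult by (simp_all add: mult_ge_chart_def)
  moreover have hom: "homogeneous (N - 1) (dx0 c)"
    using sec by (intro homogeneous_dx0 section_of_homogeneous)
  ultimately show "hasse_E (N - 1) e (dx0 c) a b t = 0"
    unfolding hasse_E_bound[OF hom diff_le_self, symmetric] hasse_E_dx0[OF sec] by simp
qed

lemma mult_ge_chart_dx1:
  assumes hom: "homogeneous N c" and mult: "mult_ge_chart N (Suc e) c t (Suc r)"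
  shows "mult_ge_chart (N - 1) e (dx1 c) t r"
  unfolding mult_ge_chart_def
proof (intro allI impI)
  fix a b assume "a + b < r"
  then have "hasse_E N (Suc e) c a (Suc b) t = 0"
    using mult by (simp add: mult_ge_chart_def)
  then show "hasse_E (N - 1) e (dx1 c) a b t = 0"
    unfolding hasse_E_bound[OF homogeneous_dx1[OF hom] diff_le_self, symmetric] hasse_E_dx1[OF hom]
    by simp
qed

lemma mult_ge_chart_dx2:
  assumes sec: "section_of N e c" and mult: "mult_ge_chart N e c t r"
  shows "mult_ge_chart (N - 1) e (dx2 c) t r"
  unfolding mult_ge_chart_def
proof (intro allI impI)
  fix a b assume "a + b < r"
  then have "hasse_E N e c a b t = 0"
    using mult by (simp add: mult_ge_chart_def)
  moreover have hom: "homogeneous (N - 1) (dx2 c)"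
    using sec by (intro homogeneous_dx2 section_of_homogeneous)
  ultimately show "hasse_E (N - 1) e (dx2 c) a b t = 0"
    unfolding hasse_E_bound[OF hom diff_le_self, symmetric] hasse_E_dx2[OF sec] by simp
qed

lemma mult_ge_chart_reweight:
  assumes "section_of N e c" and "section_of N e' c" and mult: "mult_ge_chart N e c t r"
  shows "mult_ge_chart N e' c t (r - (e' - e))"
  unfolding mult_ge_chart_def
proof (intro allI impI)
  fix a b assume "a + b < r - (e' - e)"
  then have "\<not> a + e' < e \<Longrightarrow> hasse_E N e c (a + e' - e) b t = 0"
    using mult unfolding mult_ge_chart_def by simp
  then show "hasse_E N e' c a b t = 0"
    by (simp add: hasse_E_reweight[OF assms(1,2)])
qed

(* mult_ge_E for arbitrary degree N and weight e; chart 2 of Defs is chart 1 after exchanging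
   x0 and x1 *)
definition mult_ge_on_E :: "nat \<Rightarrow> nat \<Rightarrow> form3 \<Rightarrow> complex \<times> complex \<Rightarrow> nat \<Rightarrow> bool" where
  "mult_ge_on_E N e c w r \<longleftrightarrow>
     (if fst w \<noteq> 0 then mult_ge_chart N e c (snd w / fst w) r
      else mult_ge_chart N e (swap01 c) (fst w / snd w) r)"

lemma hasse_E_swap01:
  "hasse_E K e (swap01 c) a b s = (\<Sum>i\<le>K. \<Sum>j\<le>K. \<Sum>l\<le>K. c i j l * hmon i b s * hmon (i + j - e) a 0)"
  unfolding hasse_E_def swap01_def by (subst sum.swap) (simp add: add.commute mult_ac)

lemma mult_ge_E_iff: "mult_ge_E d c w r \<longleftrightarrow> mult_ge_on_E (3 * d) d c w r"
proof (cases "fst w = 0")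
  case True
  have swap_ab: "(\<forall>a b. a + b < r \<longrightarrow> P a b) \<longleftrightarrow> (\<forall>a b. a + b < r \<longrightarrow> P b a)"
    for P :: "nat \<Rightarrow> nat \<Rightarrow> bool"
    by (metis add.commute)
  show ?thesis
    using True swap_ab unfolding mult_ge_E_def mult_ge_on_E_def mult_ge_chart_def hasse_E_swap01
    by simp
qed (simp add: mult_ge_E_def mult_ge_on_E_def mult_ge_chart_def hasse_E_def)

lemma mult_ge_on_E_mono: "mult_ge_on_E N e c w r \<Longrightarrow> r' \<le> r \<Longrightarrow> mult_ge_on_E N e c w r'"
  by (auto simp: mult_ge_on_E_def intro: mult_ge_chart_mono)

lemma mult_ge_on_E_dx0:
  assumes sec: "section_of N (Suc e) c" and "mult_ge_on_E N (Suc e) c w (Suc r)"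
  shows "mult_ge_on_E (N - 1) e (dx0 c) w r"
  using assms(2) mult_ge_chart_dx0[OF sec] mult_ge_chart_dx1[of N "swap01 c"] section_of_homogeneous[OF sec]
  by (simp add: mult_ge_on_E_def swap01_dx0 split: if_splits)

lemma mult_ge_on_E_dx1:
  assumes sec: "section_of N (Suc e) c" and "mult_ge_on_E N (Suc e) c w (Suc r)"
  shows "mult_ge_on_E (N - 1) e (dx1 c) w r"
  using assms(2) mult_ge_chart_dx1[of N c] mult_ge_chart_dx0[of N e "swap01 c"] sec section_of_homogeneous[OF sec]
  by (simp add: mult_ge_on_E_def swap01_dx1 split: if_splits)

lemma mult_ge_on_E_dx2:
  assumes sec: "section_of N e c" and "mult_ge_on_E N e c w r"
  shows "mult_ge_on_E (N - 1) e (dx2 c) w r"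
  using assms(2) mult_ge_chart_dx2[OF sec] mult_ge_chart_dx2[of N e "swap01 c"] sec
  by (simp add: mult_ge_on_E_def swap01_dx2 split: if_splits)

lemma mult_ge_on_E_reweight:
  assumes "section_of N e c" and "section_of N e' c" and "mult_ge_on_E N e c w r"
  shows "mult_ge_on_E N e' c w (r - (e' - e))"
  using assms mult_ge_chart_reweight[of N e c e'] mult_ge_chart_reweight[of N e "swap01 c" e']
  by (simp add: mult_ge_on_E_def split: if_splits)

section \<open>Three derivatives lower the degree\<close>

definition section_mult_ge :: "s1pt set \<Rightarrow> nat \<Rightarrow> nat \<Rightarrow> nat \<Rightarrow> nat \<Rightarrow> form3 \<Rightarrow> bool" where
  "section_mult_ge Z N e rP rE c \<longleftrightarrow> section_of N e c
     \<and> (\<forall>p. Off p \<in> Z \<longrightarrow> mult_ge_P2 N c p rP) \<and> (\<forall>w. OnE w \<in> Z \<longrightarrow> mult_ge_on_E N e c w rE)"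

lemma section_mult_ge_iff:
  "section_mult_ge Z (3 * d) d r r c \<longleftrightarrow> in_linsys d c \<and> (\<forall>z\<in>Z. mult_ge d c z r)"
proof -
  have "(\<forall>z\<in>Z. P z) \<longleftrightarrow> (\<forall>p. Off p \<in> Z \<longrightarrow> P (Off p)) \<and> (\<forall>w. OnE w \<in> Z \<longrightarrow> P (OnE w))" for P
    by (metis s1pt.exhaust)
  from this[of "\<lambda>z. mult_ge d c z r"] show ?thesis
    unfolding section_mult_ge_def in_linsys_iff_section_of by (simp only: mult_ge.simps mult_ge_E_iff)
qed

lemma section_mult_ge_mono:
  "section_mult_ge Z N e rP rE c \<Longrightarrow> rP' \<le> rP \<Longrightarrow> rE' \<le> rE \<Longrightarrow> section_mult_ge Z N e rP' rE' c"
  unfolding section_mult_ge_def by (meson mult_ge_P2_mono mult_ge_on_E_mono)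

lemma section_mult_ge_dx0:
  assumes "section_mult_ge Z N (Suc e) (Suc rP) (Suc rE) c"
  shows "section_mult_ge Z (N - 1) e rP rE (dx0 c)"
proof -
  have sec: "section_of N (Suc e) c" using assms unfolding section_mult_ge_def by blast
  show ?thesis
    using assms section_of_dx0[OF sec] mult_ge_P2_dx0[OF section_of_homogeneous[OF sec]]
      mult_ge_on_E_dx0[OF sec]
    unfolding section_mult_ge_def by blast
qed

lemma section_mult_ge_dx1:
  assumes "section_mult_ge Z N (Suc e) (Suc rP) (Suc rE) c"
  shows "section_mult_ge Z (N - 1) e rP rE (dx1 c)"
proof -
  have sec: "section_of N (Suc e) c" using assms unfolding section_mult_ge_def by blast
  show ?thesis
    using assms section_of_dx1[OF sec] mult_ge_P2_dx1[OF section_of_homogeneous[OF sec]]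
      mult_ge_on_E_dx1[OF sec]
    unfolding section_mult_ge_def by blast
qed

lemma section_mult_ge_dx2:
  assumes "section_mult_ge Z N e (Suc rP) rE c"
  shows "section_mult_ge Z (N - 1) e rP rE (dx2 c)"
proof -
  have sec: "section_of N e c" using assms unfolding section_mult_ge_def by blast
  show ?thesis
    using assms section_of_dx2[OF sec] mult_ge_P2_dx2[OF section_of_homogeneous[OF sec]]
      mult_ge_on_E_dx2[OF sec]
    unfolding section_mult_ge_def by blast
qed

lemma section_mult_ge_reweight:
  assumes "section_mult_ge Z N e rP rE c" and "section_of N e' c"
  shows "section_mult_ge Z N e' rP (rE - (e' - e)) c"
  using assms mult_ge_on_E_reweight[of N e c e'] unfolding section_mult_ge_def by blast

lemma section_mult_ge_funpow:
  assumes step: "\<And>N e rP rE c. section_mult_ge Z N (Suc e) (Suc rP) (Suc rE) c \<Longrightarrow>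
      section_mult_ge Z (N - 1) e rP rE (f c)"
    and "section_mult_ge Z N e rP rE c" and "k \<le> e" "k \<le> rP" "k \<le> rE"
  shows "section_mult_ge Z (N - k) (e - k) (rP - k) (rE - k) ((f ^^ k) c)"
  using assms(3-5)
proof (induction k)
  case 0
  then show ?case using assms(2) by simp
next
  case (Suc k)
  then have "section_mult_ge Z (N - k) (Suc (e - Suc k)) (Suc (rP - Suc k)) (Suc (rE - Suc k)) ((f ^^ k) c)"
    by (simp add: Suc_diff_Suc)
  then have "section_mult_ge Z (N - k - 1) (e - Suc k) (rP - Suc k) (rE - Suc k) (f ((f ^^ k) c))"
    by (rule step)
  then show ?case by simp
qed

lemma section_mult_ge_dx2_funpow:
  assumes "section_mult_ge Z N e rP rE c" and "k \<le> rP"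
  shows "section_mult_ge Z (N - k) e (rP - k) rE ((dx2 ^^ k) c)"
  using assms(2)
proof (induction k)
  case 0
  then show ?case using assms(1) by simp
next
  case (Suc k)
  then have "section_mult_ge Z (N - k) e (Suc (rP - Suc k)) rE ((dx2 ^^ k) c)"
    by (simp add: Suc_diff_Suc)
  then have "section_mult_ge Z (N - k - 1) e (rP - Suc k) rE (dx2 ((dx2 ^^ k) c))"
    by (rule section_mult_ge_dx2)
  then show ?case by simp
qed

lemma funpow_dx0_eq_0_iff: "(dx0 ^^ k) c i j l = 0 \<longleftrightarrow> c (i + k) j l = 0"
  by (induction k arbitrary: i) (auto simp: dx0_def simp del: of_nat_Suc)

lemma funpow_dx1_eq_0_iff: "(dx1 ^^ k) c i j l = 0 \<longleftrightarrow> c i (j + k) l = 0"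
  by (induction k arbitrary: j) (auto simp: dx1_def simp del: of_nat_Suc)

lemma funpow_dx2_eq_0_iff: "(dx2 ^^ k) c i j l = 0 \<longleftrightarrow> c i j (l + k) = 0"
  by (induction k arbitrary: l) (auto simp: dx2_def simp del: of_nat_Suc)

lemma obtain_coeff_max_x2_degree:
  assumes "homogeneous N c" and "nonzero_form c"
  obtains i j l where "c i j l \<noteq> 0" and "\<And>i' j' l'. c i' j' l' \<noteq> 0 \<Longrightarrow> l' \<le> l"
proof -
  define L where "L = {l. \<exists>i j. c i j l \<noteq> 0}"
  have "finite L" unfolding L_def
    by (rule finite_subset[of _ "{..N}"]) (auto dest: homogeneous_bound[OF assms(1)])
  moreover have "L \<noteq> {}" using assms(2) unfolding L_def nonzero_form_def by blast
  ultimately have "Max L \<in> L" and "\<And>l'. l' \<in> L \<Longrightarrow> l' \<le> Max L" by simp_all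
  then show thesis using that unfolding L_def by blast
qed

lemma obtain_derivative_orders:
  assumes sec: "section_of (3 * d) d F" and nz: "nonzero_form F" and d: "1 \<le> d"
  obtains a0 a1 a2 i j l where "F i j l \<noteq> 0" and "a0 \<le> i" "a1 \<le> j" "a2 \<le> l" "a0 + a1 + a2 = 3"
    and "section_of (3 * d) (d - 1 + (a0 + a1)) F"
proof -
  obtain i j l where Fijl: "F i j l \<noteq> 0" and lmax: "\<And>i' j' l'. F i' j' l' \<noteq> 0 \<Longrightarrow> l' \<le> l"
    using obtain_coeff_max_x2_degree[OF section_of_homogeneous[OF sec] nz] by blast
  have ijl: "i + j + l = 3 * d" "d \<le> i + j" using section_ofD[OF sec Fijl] by auto
  define a2 where "a2 = min l 3"
  define a1 where "a1 = min j (3 - a2)"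
  define a0 where "a0 = 3 - a2 - a1"
  have "a0 \<le> i" "a1 \<le> j" "a2 \<le> l" "a0 + a1 + a2 = 3"
    using ijl d unfolding a0_def a1_def a2_def by auto
  moreover have "section_of (3 * d) (d - 1 + (a0 + a1)) F"
    unfolding section_of_def
  proof (intro allI impI)
    fix i' j' l' assume F': "F i' j' l' \<noteq> 0"
    have "i' + j' + l' = 3 * d" "d \<le> i' + j'" "l' \<le> l"
      using section_ofD[OF sec F'] lmax[OF F'] by auto
    moreover have "d - 1 + (a0 + a1) \<le> i' + j'"
    proof (cases "3 \<le> l")
      case True
      then have "a0 + a1 = 0" using \<open>a0 + a1 + a2 = 3\<close> by (simp add: a2_def)
      then show ?thesis using \<open>d \<le> i' + j'\<close> by simp
    next
      case False
      then have "a0 + a1 + l = 3" using \<open>a0 + a1 + a2 = 3\<close> by (simp add: a2_def)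
      then show ?thesis using \<open>i' + j' + l' = 3 * d\<close> \<open>l' \<le> l\<close> d by linarith
    qed
    ultimately show "i' + j' + l' = 3 * d \<and> d - 1 + (a0 + a1) \<le> i' + j'" by simp
  qed
  ultimately show thesis using that Fijl by blast
qed

lemma exists_section_lower_degree:
  assumes lin: "in_linsys d F" and nz: "nonzero_form F" and d: "1 \<le> d"
    and mult: "\<forall>z\<in>Z. mult_ge d F z (m + 5)"
  shows "\<exists>G. in_linsys (d - 1) G \<and> nonzero_form G \<and> (\<forall>z\<in>Z. mult_ge (d - 1) G z m)"
proof -
  have sec: "section_of (3 * d) d F" using lin by (simp add: in_linsys_iff_section_of)
  obtain a0 a1 a2 i j l where Fijl: "F i j l \<noteq> 0" and a: "a0 \<le> i" "a1 \<le> j" "a2 \<le> l" "a0 + a1 + a2 = 3"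
    and sec': "section_of (3 * d) (d - 1 + (a0 + a1)) F"
    by (rule obtain_derivative_orders[OF sec nz d])
  define e where "e = d - 1 + (a0 + a1)"
  define rE where "rE = m + 5 - (a0 + a1 - 1)"
  define G where "G = (dx0 ^^ a0) ((dx1 ^^ a1) ((dx2 ^^ a2) F))"
  have "section_mult_ge Z (3 * d) d (m + 5) (m + 5) F"
    using lin mult by (simp add: section_mult_ge_iff)
  from section_mult_ge_reweight[OF this sec']
  have reweighted: "section_mult_ge Z (3 * d) e (m + 5) rE F"
    unfolding e_def rE_def using d by (simp add: add.commute)
  have after_dx2: "section_mult_ge Z (3 * d - a2) e (m + 5 - a2) rE ((dx2 ^^ a2) F)"
    by (rule section_mult_ge_dx2_funpow[OF reweighted]) (use a in simp)
  have after_dx1: "section_mult_ge Z (3 * d - a2 - a1) (e - a1) (m + 5 - a2 - a1) (rE - a1)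
      ((dx1 ^^ a1) ((dx2 ^^ a2) F))"
    by (rule section_mult_ge_funpow[OF section_mult_ge_dx1 after_dx2]) (use a in \<open>auto simp: e_def rE_def\<close>)
  have after_dx0: "section_mult_ge Z (3 * d - a2 - a1 - a0) (e - a1 - a0) (m + 5 - a2 - a1 - a0) (rE - a1 - a0) G"
    unfolding G_def
    by (rule section_mult_ge_funpow[OF section_mult_ge_dx0 after_dx1]) (use a in \<open>auto simp: e_def rE_def\<close>)
  have "3 * d - a2 - a1 - a0 = 3 * (d - 1)" "e - a1 - a0 = d - 1" "m + 5 - a2 - a1 - a0 = m + 2"
    using a d by (auto simp: e_def)
  moreover have "m \<le> rE - a1 - a0" using a by (simp add: rE_def)
  ultimately have "section_mult_ge Z (3 * (d - 1)) (d - 1) m m G"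
    using section_mult_ge_mono[OF after_dx0, of m m] by simp
  moreover have "G (i - a0) (j - a1) (l - a2) \<noteq> 0"
    unfolding G_def funpow_dx0_eq_0_iff funpow_dx1_eq_0_iff funpow_dx2_eq_0_iff using a Fijl by simp
  then have "nonzero_form G" unfolding nonzero_form_def by blast
  ultimately show ?thesis unfolding section_mult_ge_iff by blast
qed

section \<open>Products of lines through P_1\<close>

definition mul_x0 :: "form3 \<Rightarrow> form3" where "mul_x0 c i j l = (if i = 0 then 0 else c (i - 1) j l)"
definition mul_x1 :: "form3 \<Rightarrow> form3" where "mul_x1 c i j l = (if j = 0 then 0 else c i (j - 1) l)"

(* multiplication by q1 x0 - q0 x1, the line through P_1 and [q0 : q1 : 0] *)
definition mul_linear :: "complex \<times> complex \<Rightarrow> form3 \<Rightarrow> form3" where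
  "mul_linear q c i j l = snd q * mul_x0 c i j l - fst q * mul_x1 c i j l"

primrec prod_linear :: "(complex \<times> complex) list \<Rightarrow> form3" where
  "prod_linear [] = (\<lambda>i j l. if i = 0 \<and> j = 0 \<and> l = 0 then 1 else 0)"
| "prod_linear (q # qs) = mul_linear q (prod_linear qs)"

lemma mul_x1_eq_swap01: "mul_x1 c = swap01 (mul_x0 (swap01 c))"
  by (simp add: fun_eq_iff mul_x0_def mul_x1_def swap01_def)

lemma hasse_P2_mul_x0:
  assumes "\<And>j l. c K j l = 0"
  shows "hasse_P2 K (mul_x0 c) a b g p =
    fst p * hasse_P2 K c a b g p + (if a = 0 then 0 else hasse_P2 K c (a - 1) b g p)"
proof -
  obtain p0 p1 p2 where p: "p = (p0, p1, p2)" by (cases p) auto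
  define G where "G i = (\<Sum>j\<le>K. \<Sum>l\<le>K. mul_x0 c i j l * hmon i a p0 * hmon j b p1 * hmon l g p2)" for i
  have "hasse_P2 K (mul_x0 c) a b g p = (\<Sum>i\<le>K. G i)" by (simp add: hasse_P2_def G_def p)
  also have "\<dots> = (\<Sum>i\<le>K. G (Suc i))"
    by (rule sum_atMost_Suc_shift_vanishing[symmetric]) (auto simp: G_def mul_x0_def assms)
  also have "\<dots> = (\<Sum>i\<le>K. \<Sum>j\<le>K. \<Sum>l\<le>K. p0 * (c i j l * hmon i a p0 * hmon j b p1 * hmon l g p2)
        + (if a = 0 then 0 else c i j l * hmon i (a - 1) p0 * hmon j b p1 * hmon l g p2))"
    unfolding G_def by (intro sum.cong refl) (simp add: mul_x0_def hmon_Suc algebra_simps)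
  also have "\<dots> = fst p * hasse_P2 K c a b g p + (if a = 0 then 0 else hasse_P2 K c (a - 1) b g p)"
    by (simp add: hasse_P2_def p sum.distrib sum_distrib_left)
  finally show ?thesis .
qed

lemma hasse_P2_mul_x1:
  assumes "\<And>i l. c i K l = 0"
  shows "hasse_P2 K (mul_x1 c) a b g p =
    fst (snd p) * hasse_P2 K c a b g p + (if b = 0 then 0 else hasse_P2 K c a (b - 1) g p)"
proof -
  obtain p0 p1 p2 where p: "p = (p0, p1, p2)" by (cases p) auto
  have "\<And>j l. swap01 c K j l = 0" by (simp add: swap01_def assms)
  then show ?thesis
    by (simp add: p mul_x1_eq_swap01 hasse_P2_swap01 hasse_P2_mul_x0)
qed

lemma section_of_mul_linear:
  assumes "section_of n e c" shows "section_of (Suc n) (Suc e) (mul_linear q c)"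
  unfolding section_of_def
proof (intro allI impI)
  fix i j l assume "mul_linear q c i j l \<noteq> 0"
  then consider "i \<noteq> 0" "c (i - 1) j l \<noteq> 0" | "j \<noteq> 0" "c i (j - 1) l \<noteq> 0"
    by (cases "c (i - 1) j l = 0") (auto simp: mul_linear_def mul_x0_def mul_x1_def split: if_splits)
  then show "i + j + l = Suc n \<and> Suc e \<le> i + j"
    by cases (use section_ofD[OF assms] in fastforce)+
qed

lemma hasse_P2_mul_linear:
  "hasse_P2 K (mul_linear q c) a b g p =
    snd q * hasse_P2 K (mul_x0 c) a b g p - fst q * hasse_P2 K (mul_x1 c) a b g p"
  unfolding hasse_P2_def mul_linear_def by (simp add: algebra_simps sum_subtractf sum_distrib_left)

lemma mult_ge_P2_mul_linear:
  assumes hom: "homogeneous n c" and mult: "mult_ge_P2 n c p r"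
  shows "mult_ge_P2 (Suc n) (mul_linear q c) p (if snd q * fst p = fst q * fst (snd p) then Suc r else r)"
  unfolding mult_ge_P2_iff
proof (intro allI impI)
  fix a b g assume lt: "a + b + g < (if snd q * fst p = fst q * fst (snd p) then Suc r else r)"
  define H where "H a b g = hasse_P2 n c a b g p" for a b g
  have H0: "H a' b' g' = 0" if "a' + b' + g' < r" for a' b' g'
    using mult that unfolding H_def mult_ge_P2_iff by blast
  have bound: "hasse_P2 (Suc n) c a' b' g' p = H a' b' g'" for a' b' g'
    unfolding H_def by (rule hasse_P2_bound[OF hom]) simp
  have "c (Suc n) j l = 0" "c i (Suc n) l = 0" for i j l
    using homogeneous_bound[OF hom] by fastforce+
  then have "hasse_P2 (Suc n) (mul_linear q c) a b g p =
      (snd q * fst p - fst q * fst (snd p)) * H a b g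
      + snd q * (if a = 0 then 0 else H (a - 1) b g) - fst q * (if b = 0 then 0 else H a (b - 1) g)"
    by (simp add: hasse_P2_mul_linear hasse_P2_mul_x0 hasse_P2_mul_x1 bound algebra_simps)
  moreover have "(snd q * fst p - fst q * fst (snd p)) * H a b g = 0"
    using lt H0[of a b g] by (auto split: if_splits)
  moreover have "(if a = 0 then 0 else H (a - 1) b g) = 0" "(if b = 0 then 0 else H a (b - 1) g) = 0"
    using lt H0[of "a - 1" b g] H0[of a "b - 1" g] by (auto split: if_splits)
  ultimately show "hasse_P2 (Suc n) (mul_linear q c) a b g p = 0" by simp
qed

lemma nonzero_mul_linear:
  assumes hom: "homogeneous n c" and nz: "nonzero_form c" and q: "q \<noteq> (0, 0)"
  shows "nonzero_form (mul_linear q c)"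
proof (cases "fst q = 0")
  case True
  then have "snd q \<noteq> 0" using q by (cases q) auto
  obtain i j l where "c i j l \<noteq> 0" using nz unfolding nonzero_form_def by blast
  then have "mul_linear q c (Suc i) j l \<noteq> 0"
    using True \<open>snd q \<noteq> 0\<close> by (simp add: mul_linear_def mul_x0_def mul_x1_def)
  then show ?thesis unfolding nonzero_form_def by blast
next
  case False
  define J where "J = {j. \<exists>i l. c i j l \<noteq> 0}"
  have "finite J" unfolding J_def
    by (rule finite_subset[of _ "{..n}"]) (auto dest: homogeneous_bound[OF hom])
  moreover have "J \<noteq> {}" using nz unfolding J_def nonzero_form_def by blast
  ultimately have "Max J \<in> J" and "Suc (Max J) \<notin> J" using Max_ge not_less_eq_eq by auto
  then obtain i l where "c i (Max J) l \<noteq> 0" and "\<And>i' l'. c i' (Suc (Max J)) l' = 0"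
    unfolding J_def by blast
  then have "mul_linear q c i (Suc (Max J)) l \<noteq> 0"
    using False by (cases "i = 0") (simp_all add: mul_linear_def mul_x0_def mul_x1_def)
  then show ?thesis unfolding nonzero_form_def by blast
qed

lemma section_of_prod_linear: "section_of (length qs) (length qs) (prod_linear qs)"
proof (induction qs)
  case Nil
  then show ?case by (simp add: section_of_def)
next
  case (Cons q qs)
  then show ?case by (simp add: section_of_mul_linear)
qed

lemma nonzero_prod_linear: "(0, 0) \<notin> set qs \<Longrightarrow> nonzero_form (prod_linear qs)"
proof (induction qs)
  case Nil
  have "prod_linear [] 0 0 0 \<noteq> 0" by simp
  then show ?case unfolding nonzero_form_def by blast
next
  case (Cons q qs)
  then have "q \<noteq> (0, 0)" and "nonzero_form (prod_linear qs)" by auto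
  then show ?case
    using nonzero_mul_linear[OF section_of_homogeneous[OF section_of_prod_linear]] by simp
qed

lemma mult_ge_P2_prod_linear:
  "mult_ge_P2 (length qs) (prod_linear qs) p
     (length (filter (\<lambda>q. snd q * fst p = fst q * fst (snd p)) qs))"
proof (induction qs)
  case Nil
  then show ?case by (simp add: mult_ge_P2_def)
next
  case (Cons q qs)
  then show ?case
    using mult_ge_P2_mul_linear[OF section_of_homogeneous[OF section_of_prod_linear] Cons.IH, of q]
    by (simp split: if_splits)
qed

lemma mult_ge_chart_binary:
  assumes "section_of N N c" and "r \<le> N - e"
  shows "mult_ge_chart N e c t r"
  unfolding mult_ge_chart_def
proof (intro allI impI)
  fix a b assume "a + b < r"
  then have vanish: "c i j l * hmon (i + j - e) a 0 = 0" for i j l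
    using assms section_ofD[OF assms(1), of i j l] by (cases "c i j l = 0") (auto simp: hmon_at_0)
  show "hasse_E N e c a b t = 0" by (simp add: hasse_E_def vanish)
qed

lemma mult_ge_E_binary:
  assumes "section_of (3 * d) (3 * d) c" and "r \<le> 2 * d"
  shows "mult_ge_E d c w r"
  using assms mult_ge_chart_binary[of "3 * d" c r d] mult_ge_chart_binary[of "3 * d" "swap01 c" r d]
  by (simp add: mult_ge_E_iff mult_ge_on_E_def)

lemma exists_section:
  assumes "finite Z" and valid: "\<forall>z\<in>Z. valid_pt z"
  shows "\<exists>d c. in_linsys d c \<and> nonzero_form c \<and> (\<forall>z\<in>Z. mult_ge d c z M)"
proof -
  obtain zs where zs: "set zs = Z" using finite_list[OF assms(1)] by blast
  define lines where "lines z = (case z of Off p \<Rightarrow> replicate M (fst p, fst (snd p)) | OnE w \<Rightarrow> [])" for z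
  define qs0 where "qs0 = concat (map lines zs)"
  \<comment> \<open>d \<ge> M gives multiplicity 2 d \<ge> M at the points of E_1\<close>
  define d where "d = length qs0 + M"
  define qs where "qs = qs0 @ replicate (3 * d - length qs0) (0, 1)"
  define c where "c = prod_linear qs"
  have len: "length qs = 3 * d" unfolding qs_def d_def by simp
  have sec: "section_of (3 * d) (3 * d) c" unfolding c_def using section_of_prod_linear[of qs] len by simp
  then have "in_linsys d c" unfolding in_linsys_iff_section_of using section_of_mono by simp
  moreover have "(0, 0) \<notin> set qs"
    using valid zs by (auto simp: qs_def qs0_def lines_def split: s1pt.splits)
  then have "nonzero_form c" unfolding c_def by (rule nonzero_prod_linear)
  moreover have "mult_ge d c z M" if z: "z \<in> Z" for z
  proof (cases z)
    case (Off p)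
    define P where "P q \<longleftrightarrow> snd q * fst p = fst q * fst (snd p)" for q :: "complex \<times> complex"
    have "length (filter P (lines z)) \<le> length (filter P (concat (map lines xs)))"
      if "z \<in> set xs" for xs
      using that by (induction xs) auto
    then have "length (filter P (lines z)) \<le> length (filter P qs0)"
      unfolding qs0_def using z zs by blast
    also have "\<dots> \<le> length (filter P qs)" unfolding qs_def by simp
    finally have "M \<le> length (filter P qs)" using Off by (simp add: lines_def P_def mult.commute)
    moreover have "mult_ge_P2 (3 * d) c p (length (filter P qs))"
      using mult_ge_P2_prod_linear[of qs p] len unfolding c_def P_def by simp
    ultimately show ?thesis using Off mult_ge_P2_mono by simp
  next
    case (OnE w)
    then show ?thesis using mult_ge_E_binary[OF sec, of M] by (simp add: d_def)
  qed
  ultimately show ?thesis by blast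
qed

lemma in_linsys_degree_pos:
  assumes "in_linsys d c" and "nonzero_form c" and "mult_ge d c z r" and "0 < r"
  shows "0 < d"
proof (rule ccontr)
  assume "\<not> 0 < d"
  then have lin: "in_linsys 0 c" and mult: "mult_ge 0 c z r" using assms(1,3) by simp_all
  obtain i j l where "c i j l \<noteq> 0" using assms(2) unfolding nonzero_form_def by blast
  moreover from this have "(i, j, l) = (0, 0, 0)" using lin unfolding in_linsys_def by auto
  ultimately have c0: "c 0 0 0 \<noteq> 0" by simp
  show False
  proof (cases z)
    case (Off p)
    then have "hasse_P2 0 c 0 0 0 p = 0" using mult assms(4) by (simp add: mult_ge_P2_iff)
    then show False using c0 by (simp add: hasse_P2_def hmon_def)
  next
    case (OnE w)
    have "hasse_E 0 0 c' 0 0 t = c' 0 0 0" for c' t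
      by (simp add: hasse_E_def hmon_def)
    moreover have "hasse_E 0 0 c' 0 0 t = 0" if "mult_ge_chart 0 0 c' t r" for c' t
      using that assms(4) unfolding mult_ge_chart_def by simp
    moreover have "mult_ge_on_E 0 0 c w r" using OnE mult by (simp add: mult_ge_E_iff)
    ultimately show False using c0 unfolding mult_ge_on_E_def by (metis swap01_def)
  qed
qed

theorem corollary3:
  fixes Z :: "s1pt set" and m :: nat
  assumes "finite Z" and "Z \<noteq> {}" and "\<forall>z\<in>Z. valid_pt z" and "m \<ge> 1"
  shows "alpha_S1 m Z < alpha_S1 (m + 5) Z"
proof -
  define P where "P r d \<longleftrightarrow> (\<exists>c. in_linsys d c \<and> nonzero_form c \<and> (\<forall>z\<in>Z. mult_ge d c z r))" for r d
  have alpha: "alpha_S1 r Z = (LEAST d. P r d)" for r by (simp add: alpha_S1_def P_def)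
  define d where "d = alpha_S1 (m + 5) Z"
  have "P (m + 5) d"
    unfolding d_def alpha using exists_section[OF assms(1,3)] by (metis LeastI P_def)
  then obtain F where F: "in_linsys d F" "nonzero_form F" "\<forall>z\<in>Z. mult_ge d F z (m + 5)"
    unfolding P_def by blast
  obtain z where "z \<in> Z" using assms(2) by blast
  then have "mult_ge d F z (m + 5)" using F(3) by blast
  from in_linsys_degree_pos[OF F(1,2) this] have "0 < d" by simp
  then have "P m (d - 1)"
    using exists_section_lower_degree[OF F(1,2) _ F(3)] unfolding P_def by simp
  then have "alpha_S1 m Z \<le> d - 1" unfolding alpha by (rule Least_le)
  then show ?thesis using \<open>0 < d\<close> by (simp add: d_def)
qed

end
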